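(* Let $\mathbb{X}$ be a real or complex Banach algebra with identity, $\mathcal{G}$ its group of units, and $g_n:\mathbb{X}\to\mathbb{X}$ ($n\ge0$) arbitrary functions. Let $b\in\mathcal{G}$ with $|b|<1$ and $a_0,a_1\in\mathbb{X}$ with $a_0b+a_1=b^2$. Consider $$x_{n+1}=a_0x_n+a_1x_{n-1}+g_n(x_n-bx_{n-1}),\quad n\ge0. \tag{S}$$ If $x_0,x_{-1}\in\mathbb{X}$ are initial values such that the solution of the first-order equation $$t_{n+1}=(a_0-b)t_n+g_n(t_n),\quad n\ge0,$$ with initial value $t_0=x_0-bx_{-1}$ converges to $0$, then the solution of (S) with initial values $x_0,x_{-1}$ converges to $0$. In particular, if $0$ attracts all solutions of the first-order equation, then $0$ attracts all solutions of (S).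
   Context: A Banach algebra with identity is a Banach space $\mathbb{X}$ (norm $|\cdot|$) with an associative bilinear multiplication satisfying $|xy|\le|x||y|$ and identity $1$ with $|1|=1$; $\mathcal{G}$ is the set of invertible elements. Convergence is in norm. *)

theory Defs
  imports "HOL-Analysis.Analysis"
begin

definition invertible_elem :: "'a::ring_1 \<Rightarrow> bool" where
  "invertible_elem b \<longleftrightarrow> (\<exists>c. b * c = 1 \<and> c * b = 1)"

end

theory Submission
  imports Defs
begin

(* Put  y n = x n - b * x (n - 1).  Because  a0 * b + a1 = b * b,  the
   second-order equation (S) factors as
       x (n+1) - b * x n = (a0 - b) * y n + g n (y n),
   so  y  solves the first-order equation with the same initial value as  t,  hence
   y = t.  Thus  x (n+1) = b * x n + t (n+1)  with  |b| < 1  and  t -> 0, and a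
   contraction driven by a vanishing forcing term tends to 0.
   The file first proves this last fact for real sequences (the scalar estimate),
   lifts it to normed algebras, then records the factorisation of (S); the theorem
   combines the three. *)

text \<open>A nonnegative real sequence obeying the perturbed contraction
  \<open>u (n+1) \<le> q u n + s (n+1)\<close> with \<open>0 \<le> q < 1\<close> and \<open>s \<longlonglongrightarrow> 0\<close> tends to 0:
  after index \<open>N\<close> the perturbation is below \<open>e\<close>, so \<open>u (N+m) \<le> q^m u N + e/(1-q)\<close>.\<close>
lemma perturbed_contraction_tendsto_zero:
  fixes u s :: "nat \<Rightarrow> real"
  assumes q0: "0 \<le> q" and q1: "q < 1" and u0: "\<And>n. 0 \<le> u n"
    and rec: "\<And>n. u (Suc n) \<le> q * u n + s (Suc n)" and s: "s \<longlonglongrightarrow> 0"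
  shows "u \<longlonglongrightarrow> 0"
proof (rule LIMSEQ_I)
  fix r :: real assume r: "0 < r"
  define e where "e = r / 2 * (1 - q)"
  have e: "e > 0" using r q1 by (simp add: e_def)
  have e_div: "e / (1 - q) = r / 2"
    using q1 unfolding e_def by (intro nonzero_mult_div_cancel_right) simp
  obtain N where N: "\<And>n. n \<ge> N \<Longrightarrow> norm (s n) < e"
    using LIMSEQ_D[OF s e] by auto
  have bound: "u (N + m) \<le> q ^ m * u N + e / (1 - q)" for m
  proof (induction m)
    case 0 then show ?case using e q1 by simp
  next
    case (Suc m)
    have "u (N + Suc m) \<le> q * u (N + m) + s (Suc (N + m))" using rec by simp
    also have "\<dots> \<le> q * (q ^ m * u N + e / (1 - q)) + e"
      using Suc q0 N[of "Suc (N + m)"] by (intro add_mono mult_left_mono) auto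
    also have "\<dots> = q ^ Suc m * u N + e / (1 - q)"
      using q1 by (simp add: field_simps)
    finally show ?case .
  qed
  have "(\<lambda>m. q ^ m * u N) \<longlonglongrightarrow> 0"
    using q0 q1 by (intro tendsto_mult_left_zero LIMSEQ_power_zero) auto
  then obtain M where M: "\<And>m. m \<ge> M \<Longrightarrow> norm (q ^ m * u N) < r / 2"
    using LIMSEQ_D[of _ 0 "r / 2"] r by fastforce
  show "\<exists>no. \<forall>n\<ge>no. norm (u n - 0) < r"
  proof (intro exI allI impI)
    fix n assume "n \<ge> N + M"
    then obtain m where m: "n = N + m" "m \<ge> M" by (intro that[of "n - N"]) auto
    have "u n \<le> q ^ m * u N + r / 2" using bound[of m] m e_div by simp
    moreover have "q ^ m * u N < r / 2" using M[OF m(2)] q0 u0[of N] by simp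
    ultimately show "norm (u n - 0) < r" using u0[of n] by simp
  qed
qed

lemma linear_recurrence_tendsto_zero:
  fixes b :: "'a::real_normed_algebra" and x t :: "nat \<Rightarrow> 'a"
  assumes b: "norm b < 1"
    and rec: "\<And>n. x (Suc n) = b * x n + t (Suc n)"
    and t: "t \<longlonglongrightarrow> 0"
  shows "x \<longlonglongrightarrow> 0"
proof -
  have "(\<lambda>n. norm (x n)) \<longlonglongrightarrow> 0"
  proof (rule perturbed_contraction_tendsto_zero[where q = "norm b"])
    show "(\<lambda>n. norm (t n)) \<longlonglongrightarrow> 0" using t by (rule tendsto_norm_zero)
    fix n
    have "norm (x (Suc n)) \<le> norm (b * x n) + norm (t (Suc n))"
      unfolding rec by (rule norm_triangle_ineq)
    also have "\<dots> \<le> norm b * norm (x n) + norm (t (Suc n))"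
      by (simp add: norm_mult_ineq)
    finally show "norm (x (Suc n)) \<le> norm b * norm (x n) + norm (t (Suc n))" .
  qed (use b in auto)
  then show ?thesis by (simp add: tendsto_norm_zero_iff)
qed

lemma second_order_step_factors:
  fixes a0 a1 b X Y G :: "'a::ring_1"
  assumes "a0 * b + a1 = b * b"
  shows "a0 * X + a1 * Y + G - b * X = (a0 - b) * (X - b * Y) + G"
proof -
  have a1: "a1 = b * b - a0 * b" using assms by (simp add: algebra_simps)
  show ?thesis unfolding a1 by (simp add: algebra_simps)
qed

theorem theorem2:
  fixes a0 a1 b :: "'a::{real_normed_algebra_1, banach}"
    and g :: "nat \<Rightarrow> 'a \<Rightarrow> 'a"
    and x :: "int \<Rightarrow> 'a"
    and t :: "nat \<Rightarrow> 'a"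
  assumes "invertible_elem b"
    and "norm b < 1"
    and "a0 * b + a1 = b * b"
    and "\<And>n::nat. x (int n + 1) = a0 * x (int n) + a1 * x (int n - 1)
                      + g n (x (int n) - b * x (int n - 1))"
    and "t 0 = x 0 - b * x (-1)"
    and "\<And>n. t (Suc n) = (a0 - b) * t n + g n (t n)"
    and "t \<longlonglongrightarrow> 0"
  shows "(\<lambda>n::nat. x (int n)) \<longlonglongrightarrow> 0"
proof -
  have t_eq: "t n = x (int n) - b * x (int n - 1)" for n
  proof (induction n)
    case 0 then show ?case using assms(5) by simp
  next
    case (Suc n)
    have "x (int (Suc n)) - b * x (int (Suc n) - 1)
        = (a0 - b) * (x (int n) - b * x (int n - 1)) + g n (x (int n) - b * x (int n - 1))"
      using assms(4)[of n] second_order_step_factors[OF assms(3)] by (simp add: add.commute)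
    then show ?case using Suc assms(6) by simp
  qed
  have "x (int (Suc n)) = b * x (int n) + t (Suc n)" for n
    using t_eq[of "Suc n"] by simp
  then show ?thesis
    by (rule linear_recurrence_tendsto_zero[OF assms(2) _ assms(7),
          where x = "\<lambda>n. x (int n)"])
qed

end
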